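(* Let $N=\{1,\ldots,n\}$, let $(L^+,\le)$ be a totally ordered set with bottom $\mathbb{O}$ and top $\mathbb{1}$ equipped with a conjugation $a\mapsto\overline{a}$, let $\Pi:2^N\to L^+$ be a possibility measure and $\mathrm{N}$ its conjugate necessity measure, $\mathrm{N}(A)=\overline{\Pi(N\setminus A)}$, and suppose the elements of $N$ are labeled so that $\Pi(\{1\})\le\cdots\le\Pi(\{n\})$. Then: (i) $m^\Pi(A)=\Pi(\{i\})$ if $A=\{i\}$ for some $i\in N$, and $m^\Pi(A)=\mathbb{O}$ otherwise; (ii) if $\mathbb{O}<\Pi(\{1\})<\cdots<\Pi(\{n\})=\mathbb{1}$, then $m^{\mathrm{N}}(N)=\mathbb{1}$, $m^{\mathrm{N}}(\{i+1,\ldots,n\})=\overline{\Pi(\{i\})}$ for $i\in N$, and $m^{\mathrm{N}}(A)=\mathbb{O}$ for every other $A\subseteq N$; (iii) if $\Pi(\{i\})=\Pi(\{i+1\})$ for some $i$, then $m^{\mathrm{N}}(\{i+1,\ldots,n\})=\mathbb{O}$.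
   Context: A conjugation on $L^+$ is a bijective order-reversing map $a\mapsto\overline{a}$ with $\overline{\overline{a}}=a$. A capacity is an isotone map $v:(2^N,\subseteq)\to L^+$ with $v(\emptyset)=\mathbb{O}$, $v(N)=\mathbb{1}$. A possibility measure is a capacity $\Pi$ with $\Pi(A\cup B)=\Pi(A)\vee\Pi(B)$ for all $A,B\subseteq N$. For a capacity $v$, its (ordinal) Möbius transform is $m^v(A)=v(A)$ if $v(A)>v(A\setminus\{k\})$ for all $k\in A$, and $m^v(A)=\mathbb{O}$ otherwise (in particular $m^v(\emptyset)=\mathbb{O}$). *)

theory Defs
  imports Main
begin

text \<open>The totally ordered set L+ with bottom and top is a type of class linorder with
  bot and top; \<open>bot\<close> plays the role of O and \<open>top\<close> of 1.\<close>

definition conjugation :: "('a::linorder \<Rightarrow> 'a) \<Rightarrow> bool" where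
  "conjugation c \<longleftrightarrow> bij c \<and> (\<forall>a b. a \<le> b \<longrightarrow> c b \<le> c a) \<and> (\<forall>a. c (c a) = a)"

definition capacity :: "nat set \<Rightarrow> (nat set \<Rightarrow> 'a::{linorder,order_bot,order_top}) \<Rightarrow> bool" where
  "capacity N v \<longleftrightarrow> v {} = bot \<and> v N = top \<and>
     (\<forall>A B. A \<subseteq> B \<and> B \<subseteq> N \<longrightarrow> v A \<le> v B)"

definition possibility_measure :: "nat set \<Rightarrow> (nat set \<Rightarrow> 'a::{linorder,order_bot,order_top}) \<Rightarrow> bool" where
  "possibility_measure N P \<longleftrightarrow> capacity N P \<and>
     (\<forall>A B. A \<subseteq> N \<and> B \<subseteq> N \<longrightarrow> P (A \<union> B) = max (P A) (P B))"

text \<open>Ordinal Moebius transform (for A = {} the condition is vacuous and v {} = bot).\<close>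
definition mobius :: "(nat set \<Rightarrow> 'a::{linorder,order_bot}) \<Rightarrow> nat set \<Rightarrow> 'a" where
  "mobius v A = (if \<forall>k\<in>A. v (A - {k}) < v A then v A else bot)"

end

theory Submission
  imports Defs
begin

text \<open>A possibility measure is determined by its values on singletons: \<open>\<Pi>(A)\<close> is attained at some
  \<open>j \<in> A\<close>. Hence removing any other point from \<open>A\<close> does not decrease \<open>\<Pi>\<close>, so only singletons carry
  Moebius mass. For the necessity measure, removing \<open>k\<close> from \<open>A\<close> adds \<open>k\<close> to the complement, and
  \<open>\<Pi>({k} \<union> (N - A))\<close> exceeds \<open>\<Pi>(N - A)\<close> exactly when \<open>\<Pi>({k}) > \<Pi>(N - A)\<close>. Thus \<open>m\<^sup>N(A)\<close> is non-zero only
  if every element of \<open>A\<close> is strictly more possible than every element of its complement; for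
  increasingly labeled singletons this forces \<open>A\<close> to be an upper interval \<open>{i+1..n}\<close>, and the
  condition holds there precisely when \<open>\<Pi>({i}) < \<Pi>({i+1})\<close>.\<close>

definition necessity :: "('a \<Rightarrow> 'a) \<Rightarrow> nat set \<Rightarrow> (nat set \<Rightarrow> 'a) \<Rightarrow> nat set \<Rightarrow> 'a" where
  "necessity c N P A = c (P (N - A))"

lemma conjugation_less_iff:
  assumes "conjugation c"
  shows "c a < c b \<longleftrightarrow> b < a"
proof -
  have "c a \<le> c b \<longleftrightarrow> b \<le> a" for a b
    using assms unfolding conjugation_def by metis
  then show ?thesis by (metis not_le)
qed

lemma conjugation_bot:
  fixes c :: "'a::{linorder,order_bot,order_top} \<Rightarrow> 'a"
  assumes "conjugation c"
  shows "c bot = top"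
  using assms unfolding conjugation_def by (metis bot_least top.extremum_unique)

lemma possibility_measure_empty: "possibility_measure N P \<Longrightarrow> P {} = bot"
  unfolding possibility_measure_def capacity_def by blast

lemma possibility_measure_mono:
  assumes "possibility_measure N P" "A \<subseteq> B" "B \<subseteq> N"
  shows "P A \<le> P B"
  using assms unfolding possibility_measure_def capacity_def by blast

lemma possibility_measure_insert:
  assumes "possibility_measure N P" "k \<in> N" "B \<subseteq> N"
  shows "P (insert k B) = max (P {k}) (P B)"
proof -
  have "{k} \<subseteq> N" using assms(2) by simp
  with assms(1,3) have "P ({k} \<union> B) = max (P {k}) (P B)"
    unfolding possibility_measure_def by blast
  then show ?thesis by simp
qed

lemma possibility_measure_attained:
  assumes pm: "possibility_measure N P" and "finite A" "A \<noteq> {}" "A \<subseteq> N"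
  shows "\<exists>j\<in>A. P A = P {j}"
  using assms(2-4)
proof (induction A rule: finite_ne_induct)
  case (insert x F)
  then obtain j where "j \<in> F" "P F = P {j}" by auto
  with insert.prems show ?case
    using possibility_measure_insert[OF pm, of x F] by (auto simp: max_def)
qed auto

lemma possibility_measure_atLeastAtMost:
  assumes pm: "possibility_measure N P" and "a \<le> m" "{a..m} \<subseteq> N"
    and below: "\<And>i. i \<in> {a..m} \<Longrightarrow> P {i} \<le> P {m}"
  shows "P {a..m} = P {m}"
proof -
  have "{a..m} \<noteq> {}" using assms(2) by simp
  then obtain j where "j \<in> {a..m}" "P {a..m} = P {j}"
    using possibility_measure_attained[OF pm finite_atLeastAtMost _ assms(3)] by blast
  moreover have "P {m} \<le> P {a..m}"
    using possibility_measure_mono[OF pm, of "{m}"] assms(2,3) by simp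
  ultimately show ?thesis using below by (simp add: order.antisym)
qed

lemma mobius_singleton: "v {} = bot \<Longrightarrow> mobius v {i} = v {i}"
  unfolding mobius_def using bot.not_eq_extremum by fastforce

lemma mobius_possibility_measure_non_singleton:
  assumes pm: "possibility_measure N P" and "finite N" "A \<subseteq> N" "\<nexists>i. A = {i}"
  shows "mobius P A = bot"
proof (cases "A = {}")
  case True
  then show ?thesis by (simp add: mobius_def possibility_measure_empty[OF pm])
next
  case False
  obtain j where j: "j \<in> A" "P A = P {j}"
    using possibility_measure_attained[OF pm] assms(2,3) False finite_subset by metis
  then obtain k where k: "k \<in> A" "k \<noteq> j" using assms(4) by blast
  have "P {j} \<le> P (A - {k})"
    using possibility_measure_mono[OF pm, of "{j}" "A - {k}"] assms(3) j k by auto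
  with j k show ?thesis unfolding mobius_def by auto
qed

lemma mobius_necessity:
  assumes conj: "conjugation c" and pm: "possibility_measure N P" and "A \<subseteq> N"
  shows "mobius (necessity c N P) A =
    (if \<forall>k\<in>A. P (N - A) < P {k} then c (P (N - A)) else bot)"
proof -
  have "necessity c N P (A - {k}) < necessity c N P A \<longleftrightarrow> P (N - A) < P {k}" if "k \<in> A" for k
  proof -
    have "N - (A - {k}) = insert k (N - A)" using that assms(3) by auto
    moreover have "P (insert k (N - A)) = max (P {k}) (P (N - A))"
      using possibility_measure_insert[OF pm, of k "N - A"] that assms(3) by blast
    ultimately show ?thesis
      unfolding necessity_def conjugation_less_iff[OF conj] by (simp add: less_max_iff_disj)
  qed
  then show ?thesis unfolding mobius_def by (simp add: necessity_def cong: ball_cong)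
qed

lemma upward_closed_eq_atLeastAtMost:
  fixes A :: "nat set"
  assumes "A \<subseteq> {1..n}" and closed: "\<And>k j. k \<in> A \<Longrightarrow> k < j \<Longrightarrow> j \<le> n \<Longrightarrow> j \<in> A"
  shows "\<exists>i\<le>n. A = {i+1..n}"
proof (cases "A = {}")
  case True
  then show ?thesis by (intro exI[of _ n]) simp
next
  case False
  have fin: "finite A" using finite_subset[OF assms(1)] by simp
  define m where "m = Min A"
  have m: "m \<in> A" using Min_in[OF fin False] by (simp add: m_def)
  have "A = {m..n}"
  proof
    show "A \<subseteq> {m..n}" using Min_le[OF fin] assms(1) by (auto simp: m_def)
    show "{m..n} \<subseteq> A" using closed m by (auto simp: le_less)
  qed
  moreover have "1 \<le> m" "m \<le> n" using m assms(1) by auto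
  ultimately show ?thesis by (intro exI[of _ "m - 1"]) simp
qed

lemma strict_chain_less:
  fixes f :: "nat \<Rightarrow> 'a::order"
  assumes step: "\<And>i. 1 \<le> i \<Longrightarrow> i < n \<Longrightarrow> f i < f (i + 1)" and "1 \<le> i" "i < j" "j \<le> n"
  shows "f i < f j"
proof -
  have "1 \<le> i \<longrightarrow> j \<le> n \<longrightarrow> f i < f j"
    using \<open>i < j\<close>
  proof (induction rule: less_Suc_induct)
    case (1 i)
    then show ?case using step[of i] by simp
  next
    case (2 i j k)
    then show ?case by (auto intro: order.strict_trans)
  qed
  with assms show ?thesis by blast
qed

context
  fixes n :: nat and P :: "nat set \<Rightarrow> 'a::{linorder,order_bot,order_top}"
  assumes pm: "possibility_measure {1..n} P"
    and labeled: "\<And>i j. 1 \<le> i \<Longrightarrow> i \<le> j \<Longrightarrow> j \<le> n \<Longrightarrow> P {i} \<le> P {j}"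
begin

lemma labeled_complement_upper:
  assumes "i \<in> {1..n}"
  shows "P ({1..n} - {i+1..n}) = P {i}"
proof -
  have "{1..n} - {i+1..n} = {1..i}" using assms by auto
  then show ?thesis
    using possibility_measure_atLeastAtMost[OF pm, of 1 i] labeled assms by auto
qed

lemma mobius_necessity_upper_interval:
  assumes "conjugation c" "i \<in> {1..n}"
  shows "mobius (necessity c {1..n} P) {i+1..n} =
    (if \<forall>k\<in>{i+1..n}. P {i} < P {k} then c (P {i}) else bot)"
  using mobius_necessity[OF assms(1) pm, of "{i+1..n}"] labeled_complement_upper[OF assms(2)]
  by auto

lemma mobius_necessity_not_upper_interval:
  assumes "conjugation c" "A \<subseteq> {1..n}" "\<forall>i\<le>n. A \<noteq> {i+1..n}"
  shows "mobius (necessity c {1..n} P) A = bot"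
proof -
  obtain k j where kj: "k \<in> A" "k < j" "j \<le> n" "j \<notin> A"
    using upward_closed_eq_atLeastAtMost[OF assms(2)] assms(3) by blast
  have "P {k} \<le> P {j}" using labeled kj assms(2) by auto
  also have "\<dots> \<le> P ({1..n} - A)"
    using possibility_measure_mono[OF pm, of "{j}"] kj assms(2) by auto
  finally show ?thesis
    using mobius_necessity[OF assms(1) pm assms(2)] kj(1) by (auto simp: not_less)
qed

end

theorem theorem3:
  fixes n :: nat
    and P :: "nat set \<Rightarrow> 'a::{linorder,order_bot,order_top}"
    and c :: "'a \<Rightarrow> 'a"
  assumes n: "n \<ge> 1"
    and conj: "conjugation c"
    and poss: "possibility_measure {1..n} P"
    and labeled: "\<And>i j. 1 \<le> i \<Longrightarrow> i \<le> j \<Longrightarrow> j \<le> n \<Longrightarrow> P {i} \<le> P {j}"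
  shows
    "((\<forall>i\<in>{1..n}. mobius P {i} = P {i}) \<and>
      (\<forall>A. A \<subseteq> {1..n} \<and> \<not> (\<exists>i\<in>{1..n}. A = {i}) \<longrightarrow> mobius P A = bot))
     \<and>
     ((bot < P {1} \<and> (\<forall>i. 1 \<le> i \<and> i < n \<longrightarrow> P {i} < P {i+1}) \<and> P {n} = top) \<longrightarrow>
        (mobius (\<lambda>A. c (P ({1..n} - A))) {1..n} = top \<and>
         (\<forall>i\<in>{1..n}. mobius (\<lambda>A. c (P ({1..n} - A))) {i+1..n} = c (P {i})) \<and>
         (\<forall>A. A \<subseteq> {1..n} \<and> A \<noteq> {1..n} \<and> (\<forall>i\<in>{1..n}. A \<noteq> {i+1..n}) \<longrightarrow>
              mobius (\<lambda>A. c (P ({1..n} - A))) A = bot)))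
     \<and>
     (\<forall>i. 1 \<le> i \<and> i < n \<and> P {i} = P {i+1} \<longrightarrow>
        mobius (\<lambda>A. c (P ({1..n} - A))) {i+1..n} = bot)"
proof -
  have nec: "(\<lambda>A. c (P ({1..n} - A))) = necessity c {1..n} P"
    by (simp add: necessity_def fun_eq_iff)
  have pos: "bot < P {k}" if "bot < P {1}" "k \<in> {1..n}" for k
    using that labeled[of 1 k] by (auto intro: less_le_trans)
  have "mobius P {i} = P {i}" for i
    using mobius_singleton possibility_measure_empty[OF poss] .
  moreover have "mobius P A = bot" if "A \<subseteq> {1..n}" "\<not> (\<exists>i\<in>{1..n}. A = {i})" for A
    using mobius_possibility_measure_non_singleton[OF poss] that by blast
  moreover have "mobius (necessity c {1..n} P) {1..n} = top" if "bot < P {1}"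
    using mobius_necessity[OF conj poss, of "{1..n}"] pos[OF that]
    by (simp add: possibility_measure_empty[OF poss] conjugation_bot[OF conj])
  moreover have "mobius (necessity c {1..n} P) {i+1..n} = c (P {i})"
    if "\<forall>i. 1 \<le> i \<and> i < n \<longrightarrow> P {i} < P {i+1}" "i \<in> {1..n}" for i
    using mobius_necessity_upper_interval[OF poss labeled conj that(2)]
      strict_chain_less[of n "\<lambda>i. P {i}"] that by auto
  moreover have "mobius (necessity c {1..n} P) A = bot"
    if "A \<subseteq> {1..n}" "A \<noteq> {1..n}" "\<forall>i\<in>{1..n}. A \<noteq> {i+1..n}" for A
    using mobius_necessity_not_upper_interval[OF poss labeled conj that(1)] that
    by (metis Suc_eq_plus1 atLeastAtMost_iff le_0_eq not_less_eq_eq One_nat_def)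
  moreover have "mobius (necessity c {1..n} P) {i+1..n} = bot"
    if "1 \<le> i" "i < n" "P {i} = P {i+1}" for i
    using mobius_necessity_upper_interval[OF poss labeled conj, of i] that by force
  ultimately show ?thesis unfolding nec by blast
qed

end
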